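(* Let $a_n=n$ for all $n\ge1$. Then for every integer $n\ge1$ that is not of the form $p^k$ with $p$ prime and $k\ge1$, one has $A_n^+=A_n^-$; in particular $A_n^+\equiv A_n^-\pmod n$.
   Context: $\mu$ is the Möbius function. For an integer sequence $(a_n)$ and $n\ge1$, $A_n^+=\prod_{d\mid n,\ \mu(d)=1} a_{n/d}$ and $A_n^-=\prod_{d\mid n,\ \mu(d)=-1} a_{n/d}$ (empty products equal $1$). *)

theory Defs
  imports "HOL-Computational_Algebra.Computational_Algebra"
begin

text \<open>Moebius function: 0 if n is not squarefree, otherwise (-1)^(number of distinct prime factors).
  mu 0 is set to 0 (irrelevant: only divisors of n >= 1 are used).\<close>
definition mu :: "nat \<Rightarrow> int" where
  "mu n = (if n = 0 \<or> \<not> squarefree n then 0 else (-1) ^ card (prime_factors n))"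

definition A_plus :: "(nat \<Rightarrow> int) \<Rightarrow> nat \<Rightarrow> int" where
  "A_plus a n = (\<Prod>d \<in> {d. d dvd n \<and> mu d = 1}. a (n div d))"

definition A_minus :: "(nat \<Rightarrow> int) \<Rightarrow> nat \<Rightarrow> int" where
  "A_minus a n = (\<Prod>d \<in> {d. d dvd n \<and> mu d = -1}. a (n div d))"

end

theory Submission
  imports Defs
begin

(* Pick distinct primes p, q dividing n and let t_p d be d with the factor p toggled
   (removed if present, added otherwise).  On squarefree divisors toggling p flips the
   sign of mu, so t_p and t_q map the divisors with mu = 1 bijectively onto those with
   mu = -1, and t_p o t_q permutes the former.  Reindexing,
   (A_n^+)^2 = prod (n/d) (n/t_p (t_q d)) and (A_n^-)^2 = prod (n/t_p d) (n/t_q d),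
   which agree termwise because d * t_p (t_q d) = t_p d * t_q d.  Squares of natural
   numbers determine them. *)

definition mu_divisors :: "nat \<Rightarrow> int \<Rightarrow> nat set" where
  "mu_divisors n s = {d. d dvd n \<and> mu d = s}"

definition toggle_prime :: "nat \<Rightarrow> nat \<Rightarrow> nat" where
  "toggle_prime p d = (if p dvd d then d div p else p * d)"

lemma mu_nonzero_iff: "mu d \<noteq> 0 \<longleftrightarrow> d > 0 \<and> squarefree d"
  by (auto simp: mu_def)

lemma mu_prime_mult:
  fixes p e :: nat
  assumes "prime p" "\<not> p dvd e"
  shows "mu (p * e) = - mu e"
proof -
  have "e > 0" using assms(2) by (intro gr0I) auto
  have "coprime p e" using assms by (simp add: prime_imp_coprime)
  then have squarefree_iff: "squarefree (p * e) \<longleftrightarrow> squarefree e"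
    using assms(1) squarefree_mult_coprime squarefree_multD squarefree_prime by blast
  have "prime_factors (p * e) = insert p (prime_factors e)"
    using assms \<open>e > 0\<close> by (simp add: prime_factorization_mult prime_factorization_prime)
  moreover have "p \<notin> prime_factors e" using assms(2) by (auto simp: prime_factors_dvd)
  ultimately have "card (prime_factors (p * e)) = Suc (card (prime_factors e))" by simp
  then show ?thesis using squarefree_iff assms(1) \<open>e > 0\<close> by (simp add: mu_def prime_gt_0_nat)
qed

lemma squarefree_prime_dvd_quotient:
  fixes p d :: nat
  assumes "squarefree d" "p dvd d" "prime p"
  shows "\<not> p dvd d div p"
proof
  assume "p dvd d div p"
  then have "p ^ 2 dvd d"
    using assms(2) by (metis dvd_mult_div_cancel dvd_refl mult_dvd_mono power2_eq_square)
  then show False using assms(1,3) by (auto simp: squarefree_def not_prime_unit)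
qed

lemma toggle_prime_toggle_prime:
  assumes "prime p" "squarefree d"
  shows "toggle_prime p (toggle_prime p d) = d"
proof (cases "p dvd d")
  case True
  then show ?thesis
    using squarefree_prime_dvd_quotient[OF assms(2) True assms(1)] by (simp add: toggle_prime_def)
next
  case False
  then show ?thesis using assms(1) by (simp add: toggle_prime_def prime_gt_0_nat)
qed

lemma mu_toggle_prime:
  assumes "prime p" "squarefree d"
  shows "mu (toggle_prime p d) = - mu d"
proof (cases "p dvd d")
  case True
  then have "mu d = mu (p * (d div p))" by simp
  also have "\<dots> = - mu (d div p)"
    using mu_prime_mult squarefree_prime_dvd_quotient True assms by blast
  finally show ?thesis using True by (simp add: toggle_prime_def)
next
  case False
  then show ?thesis using mu_prime_mult assms(1) by (simp add: toggle_prime_def)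
qed

lemma toggle_prime_dvd:
  fixes p d n :: nat
  assumes "prime p" "p dvd n" "d dvd n"
  shows "toggle_prime p d dvd n"
proof (cases "p dvd d")
  case True
  then show ?thesis
    using assms(3) by (simp add: toggle_prime_def) (metis dvd_div_mult_self dvd_triv_left dvd_trans)
next
  case False
  then have "coprime p d" using assms(1) by (simp add: prime_imp_coprime)
  then show ?thesis using False assms(2,3) by (simp add: toggle_prime_def divides_mult)
qed

lemma bij_betw_toggle_prime_mu_divisors:
  assumes "prime p" "p dvd n" "s \<noteq> 0"
  shows "bij_betw (toggle_prime p) (mu_divisors n s) (mu_divisors n (- s))"
proof (rule bij_betw_byWitness[where f' = "toggle_prime p"])
  have "squarefree d" if "mu d = s \<or> mu d = - s" for d
    using that assms(3) mu_nonzero_iff by fastforce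
  then show "\<forall>d\<in>mu_divisors n s. toggle_prime p (toggle_prime p d) = d"
    and "\<forall>d\<in>mu_divisors n (- s). toggle_prime p (toggle_prime p d) = d"
    and "toggle_prime p ` mu_divisors n s \<subseteq> mu_divisors n (- s)"
    and "toggle_prime p ` mu_divisors n (- s) \<subseteq> mu_divisors n s"
    using assms by (auto simp: mu_divisors_def toggle_prime_toggle_prime mu_toggle_prime
        toggle_prime_dvd)
qed

lemma toggle_prime_mult_toggle_prime:
  fixes p q d :: nat
  assumes "prime p" "prime q" "p \<noteq> q"
  shows "toggle_prime p d * toggle_prime q d = d * toggle_prime p (toggle_prime q d)"
proof -
  have pos: "p > 0" "q > 0" using assms(1,2) prime_gt_0_nat by blast+
  have cancel: "toggle_prime r (r * e) = e" if "r > 0" for r e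
    using that by (simp add: toggle_prime_def)
  have "\<not> p dvd q" using assms primes_dvd_imp_eq by blast
  then have p_dvd: "p dvd q * x \<longleftrightarrow> p dvd x" for x using assms(1) prime_dvd_mult_iff by blast
  show ?thesis
  proof (cases "q dvd d")
    case True
    then obtain e where e: "d = q * e" by blast
    show ?thesis
    proof (cases "p dvd e")
      case True
      then obtain f where "e = p * f" by blast
      then show ?thesis using e pos cancel[of p] cancel[of q]
        by (simp add: toggle_prime_def mult.left_commute)
    next
      case False
      then show ?thesis using e pos p_dvd
        by (simp add: toggle_prime_def mult.left_commute)
    qed
  next
    case False
    show ?thesis
    proof (cases "p dvd d")
      case True
      then obtain f where f: "d = p * f" by blast
      then have "\<not> q dvd f" using False by auto
      then show ?thesis using f pos False
        by (simp add: toggle_prime_def mult.left_commute)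
    next
      case False
      then show ?thesis using \<open>\<not> q dvd d\<close> p_dvd by (simp add: toggle_prime_def mult.left_commute)
    qed
  qed
qed

lemma div_mult_div_eq:
  fixes n x y u v :: nat
  assumes "x dvd n" "y dvd n" "u dvd n" "v dvd n" "x * y = u * v"
  shows "(n div x) * (n div y) = (n div u) * (n div v)"
proof (cases "n = 0")
  case False
  then have "x * y \<noteq> 0" using assms by auto
  moreover have "(n div x) * (n div y) * (x * y) = (n div u) * (n div v) * (u * v)"
    using assms(1-4) by (metis dvd_div_mult_self mult.assoc mult.left_commute)
  ultimately show ?thesis using assms(5) by simp
qed simp

lemma prod_mu_divisors_quotients_eq:
  fixes n p q :: nat
  assumes "prime p" "prime q" "p \<noteq> q" "p dvd n" "q dvd n"
  shows "(\<Prod>d\<in>mu_divisors n 1. n div d) = (\<Prod>d\<in>mu_divisors n (-1). n div d)"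
    (is "?P = ?M")
proof -
  let ?D = "mu_divisors n 1" and ?f = "\<lambda>d. n div d"
  have bij_p: "bij_betw (toggle_prime p) ?D (mu_divisors n (-1))"
    and bij_q: "bij_betw (toggle_prime q) ?D (mu_divisors n (-1))"
    using bij_betw_toggle_prime_mu_divisors[of _ n 1] assms by simp_all
  have "bij_betw (toggle_prime p) (mu_divisors n (-1)) ?D"
    using bij_betw_toggle_prime_mu_divisors[of p n "-1"] assms by simp
  then have bij_pq: "bij_betw (toggle_prime p \<circ> toggle_prime q) ?D ?D"
    using bij_q bij_betw_trans by blast
  have orbit_identity: "?f d * ?f (toggle_prime p (toggle_prime q d)) =
      ?f (toggle_prime p d) * ?f (toggle_prime q d)" if "d \<in> ?D" for d
    using that assms
    by (intro div_mult_div_eq) (auto simp: mu_divisors_def toggle_prime_dvd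
        toggle_prime_mult_toggle_prime)
  have "?P * ?P = (\<Prod>d\<in>?D. ?f d * ?f (toggle_prime p (toggle_prime q d)))"
    using prod.reindex_bij_betw[OF bij_pq, of ?f] by (simp add: prod.distrib)
  also have "\<dots> = (\<Prod>d\<in>?D. ?f (toggle_prime p d) * ?f (toggle_prime q d))"
    using orbit_identity by (rule prod.cong[OF refl])
  also have "\<dots> = ?M * ?M"
    using prod.reindex_bij_betw[OF bij_p, of ?f] prod.reindex_bij_betw[OF bij_q, of ?f]
    by (simp add: prod.distrib)
  finally show ?thesis by (simp add: power2_eq_square[symmetric])
qed

lemma obtain_two_prime_divisors:
  fixes n :: nat
  assumes "n > 1" "\<not> (\<exists>p k. prime p \<and> k \<ge> 1 \<and> n = p ^ k)"
  obtains p q where "prime p" "prime q" "p \<noteq> q" "p dvd n" "q dvd n"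
proof -
  obtain p where p: "prime p" "p dvd n" using prime_factor_nat[of n] assms(1) by auto
  obtain m where m: "n = p ^ multiplicity p n * m" "\<not> p dvd m"
    by (rule multiplicity_decompose'[of n p]) (use assms(1) p(1) in auto)
  have "multiplicity p n \<ge> 1"
    using p assms(1) by (simp add: prime_multiplicity_gt_zero_iff Suc_le_eq)
  then have "m \<noteq> 1" using assms(2) m(1) p(1) by auto
  then obtain q where q: "prime q" "q dvd m" using prime_factor_nat[of m] by blast
  have "q dvd n" using m(1) q(2) by (metis dvd_mult2 mult.commute)
  moreover have "p \<noteq> q" using q(2) m(2) by blast
  ultimately show ?thesis using that p q by blast
qed

theorem lemma2:
  fixes a :: "nat \<Rightarrow> int" and n :: nat
  assumes "\<And>m. m \<ge> 1 \<Longrightarrow> a m = int m"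
    and "n \<ge> 1"
    and "\<not> (\<exists>p k. prime p \<and> k \<ge> 1 \<and> n = p ^ k)"
  shows "A_plus a n = A_minus a n \<and> A_plus a n mod int n = A_minus a n mod int n"
proof -
  have quotient: "a (n div d) = int (n div d)" if "d \<in> mu_divisors n s" for d s
    using that assms(1,2) by (auto simp: mu_divisors_def dvd_div_eq_0_iff Suc_le_eq)
  have "A_plus a n = int (\<Prod>d\<in>mu_divisors n 1. n div d)"
    and "A_minus a n = int (\<Prod>d\<in>mu_divisors n (-1). n div d)"
    by (simp_all add: A_plus_def A_minus_def flip: mu_divisors_def add: quotient)
  moreover have "(\<Prod>d\<in>mu_divisors n 1. n div d) = (\<Prod>d\<in>mu_divisors n (-1). n div d)"
  proof (cases "n = 1")
    case True
    then have "mu_divisors n 1 = {1}" "mu_divisors n (-1) = {}"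
      by (auto simp: mu_divisors_def mu_def)
    then show ?thesis using True by simp
  next
    case False
    then obtain p q where "prime p" "prime q" "p \<noteq> q" "p dvd n" "q dvd n"
      using obtain_two_prime_divisors assms(2,3) by (metis le_neq_implies_less)
    then show ?thesis by (rule prod_mu_divisors_quotients_eq)
  qed
  ultimately show ?thesis by simp
qed

end
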